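(* For every $c\ge0$, every distribution $\mathcal{D}$ over $\mathbb{R}^k_{\ge0}$ and every mechanism $M$, there exists a $c$-expensive mechanism $M'$ with $\mathrm{Rev}(\mathcal{D},M')\ge\mathrm{Rev}(\mathcal{D},M)-c$.
   Context: Setting: one seller, one additive buyer, $k$ items; the buyer's value vector $\vec v\in\mathbb{R}^k_{\ge0}$ is drawn from a distribution $\mathcal{D}$. A mechanism $M$ is a set of options $(\vec q,p)$ with $\vec q\in[0,1]^k$, $p\in\mathbb{R}$, always containing the null option $(\vec 0,0)$; a buyer with values $\vec v$ selects an option maximizing $\vec v\cdot\vec q-p$ (ties broken arbitrarily; a maximizer is assumed to exist), and $\vec q^M(\vec v),p^M(\vec v)$ denote the allocation and price of the selected option. $\mathrm{Rev}(\mathcal{D},M)=\mathbb{E}_{\vec v\sim\mathcal{D}}[p^M(\vec v)]$. A mechanism is $c$-expensive if every option other than the null option $(\vec 0,0)$ has price at least $c$. *)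

theory Defs
  imports "HOL-Analysis.Analysis" "HOL-Probability.Probability"
begin

text \<open>Items are indexed by a finite type 'k; an option is a pair (allocation, price).\<close>

type_synonym 'k opt = "(real ^ 'k) \<times> real"

definition nonneg_vals :: "real ^ ('k::finite) \<Rightarrow> bool" where
  "nonneg_vals v \<longleftrightarrow> (\<forall>i. 0 \<le> v $ i)"

definition utility :: "real ^ ('k::finite) \<Rightarrow> 'k opt \<Rightarrow> real" where
  "utility v o' = inner v (fst o') - snd o'"

definition is_mechanism :: "('k::finite) opt set \<Rightarrow> bool" where
  "is_mechanism M \<longleftrightarrow> (0, 0) \<in> M \<and> (\<forall>(q, p) \<in> M. \<forall>i. 0 \<le> q $ i \<and> q $ i \<le> 1)"

definition selects :: "('k::finite) opt set \<Rightarrow> (real ^ 'k \<Rightarrow> 'k opt) \<Rightarrow> bool" where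
  "selects M sel \<longleftrightarrow> (\<forall>v. nonneg_vals v \<longrightarrow>
      sel v \<in> M \<and> (\<forall>o' \<in> M. utility v o' \<le> utility v (sel v)))"

definition Rev :: "(real ^ ('k::finite)) measure \<Rightarrow> (real ^ 'k \<Rightarrow> 'k opt) \<Rightarrow> real" where
  "Rev D sel = (\<integral>v. snd (sel v) \<partial>D)"

definition c_expensive :: "real \<Rightarrow> ('k::finite) opt set \<Rightarrow> bool" where
  "c_expensive c M \<longleftrightarrow> (\<forall>o' \<in> M. o' \<noteq> (0, 0) \<longrightarrow> c \<le> snd o')"

end

theory Submission
  imports Defs
begin

text \<open>Remove every option whose price lies outside a closed window \<open>I \<subseteq> [c, \<infinity>)\<close>, take the
  closure of what remains and add the null option. A buyer whose original choice has its price in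
  \<open>I\<close> can keep it, since every remaining option is a limit of options she could already take.
  Everybody else takes a best response of highest price; it exists by compactness, and its price
  is an upper semicontinuous, hence measurable, function of the values. Such a buyer pays at least
  \<open>0\<close>, so at most \<open>E[p; p \<notin> I]\<close> is lost, which is at most \<open>c\<close> for \<open>I = [c, \<infinity>)\<close>. To keep the new
  revenue integrable the window is \<open>[c, N]\<close> for large \<open>N\<close> (dominated convergence); this fails only
  when \<open>p \<ge> c\<close> almost surely, and then \<open>I = [c, \<infinity>)\<close> changes the selection only on a null set.\<close>

lemma inner_le_card_norm:
  fixes v q :: "real^'k::finite"
  assumes "\<forall>i. 0 \<le> q $ i \<and> q $ i \<le> 1"
  shows "inner v q \<le> real CARD('k) * norm v"
proof -
  have "v $ i * q $ i \<le> norm v" for i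
  proof -
    have "v $ i * q $ i \<le> \<bar>v $ i\<bar> * q $ i" using assms by (intro mult_right_mono) auto
    also have "\<dots> \<le> \<bar>v $ i\<bar>" using assms by (simp add: mult_left_le)
    also have "\<dots> \<le> norm v" by (rule component_le_norm_cart)
    finally show ?thesis .
  qed
  then have "(\<Sum>i\<in>UNIV. v $ i * q $ i) \<le> (\<Sum>i\<in>(UNIV::'k set). norm v)"
    by (intro sum_mono) auto
  then show ?thesis by (simp add: inner_vec_def)
qed

lemma continuous_on_utility: "continuous_on S (utility v)"
  unfolding utility_def by (intro continuous_intros)

locale closed_menu =
  fixes K :: "'k::finite opt set"
  assumes closed_menu: "closed K"
    and null_in_menu: "(0, 0) \<in> K"
    and alloc_unit: "o' \<in> K \<Longrightarrow> 0 \<le> fst o' $ i \<and> fst o' $ i \<le> 1"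
    and price_nonneg: "o' \<in> K \<Longrightarrow> 0 \<le> snd o'"
begin

definition bounded_part :: "real \<Rightarrow> 'k opt set" where
  "bounded_part B = K \<inter> (cbox 0 1 \<times> {0..real CARD('k) * B})"

lemma compact_bounded_part: "compact (bounded_part B)"
  unfolding bounded_part_def
  by (intro closed_Int_compact closed_menu compact_Times compact_cbox compact_Icc)

lemma in_bounded_part:
  assumes "o' \<in> K" "0 \<le> utility v o'" "norm v \<le> B"
  shows "o' \<in> bounded_part B"
proof -
  have "snd o' \<le> inner v (fst o')" using assms(2) by (simp add: utility_def)
  also have "\<dots> \<le> real CARD('k) * norm v" using inner_le_card_norm alloc_unit[OF assms(1)] by blast
  also have "\<dots> \<le> real CARD('k) * B" using assms(3) by (simp add: mult_left_mono)
  finally show ?thesis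
    using assms(1) alloc_unit[OF assms(1)] price_nonneg[OF assms(1)] unfolding bounded_part_def
    by (cases o') (auto simp: mem_box_cart)
qed

definition best_responses :: "real^'k \<Rightarrow> 'k opt set" where
  "best_responses v = {o' \<in> K. \<forall>o'' \<in> K. utility v o'' \<le> utility v o'}"

lemma best_responses_subset:
  assumes "norm v \<le> B"
  shows "best_responses v \<subseteq> bounded_part B"
proof
  fix o' assume "o' \<in> best_responses v"
  then have "o' \<in> K" "utility v (0, 0) \<le> utility v o'"
    using null_in_menu unfolding best_responses_def by auto
  then show "o' \<in> bounded_part B" using in_bounded_part assms by (simp add: utility_def)
qed

lemma compact_best_responses: "compact (best_responses v)"
proof -
  have "best_responses v = K \<inter> (\<Inter>o'' \<in> K. {o'. utility v o'' \<le> utility v o'})"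
    unfolding best_responses_def by auto
  then have "closed (best_responses v)"
    unfolding utility_def
    by (simp add: closed_Int closed_menu closed_INT closed_Collect_le continuous_intros)
  then show ?thesis
    using compact_Int_closed[OF compact_bounded_part] best_responses_subset[OF order_refl]
    by (metis inf.absorb_iff2)
qed

lemma best_responses_nonempty: "best_responses v \<noteq> {}"
proof -
  have "(0, 0) \<in> bounded_part (norm v)"
    by (rule in_bounded_part[OF null_in_menu, of v]) (simp_all add: utility_def)
  then obtain o' where o': "o' \<in> bounded_part (norm v)"
    and max: "\<forall>o'' \<in> bounded_part (norm v). utility v o'' \<le> utility v o'"
    using continuous_attains_sup[OF compact_bounded_part _ continuous_on_utility] by blast
  have "utility v o'' \<le> utility v o'" if "o'' \<in> K" for o''
  proof (cases "0 \<le> utility v o''")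
    case True then show ?thesis using max in_bounded_part[OF that] by blast
  next
    case False then show ?thesis
      using max \<open>(0, 0) \<in> bounded_part (norm v)\<close> by (force simp: utility_def)
  qed
  moreover have "o' \<in> K" using o' unfolding bounded_part_def by blast
  ultimately show ?thesis unfolding best_responses_def by blast
qed

definition top_response :: "real^'k \<Rightarrow> 'k opt" where
  "top_response v = (SOME o'. o' \<in> best_responses v \<and> (\<forall>o'' \<in> best_responses v. snd o'' \<le> snd o'))"

lemma top_response:
  "top_response v \<in> best_responses v"
  "o'' \<in> best_responses v \<Longrightarrow> snd o'' \<le> snd (top_response v)"
proof -
  have "continuous_on (best_responses v) snd" by (intro continuous_intros)
  then have "\<exists>o'. o' \<in> best_responses v \<and> (\<forall>o'' \<in> best_responses v. snd o'' \<le> snd o')"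
    using continuous_attains_sup[OF compact_best_responses best_responses_nonempty] by blast
  from someI_ex[OF this]
  show "top_response v \<in> best_responses v"
    "o'' \<in> best_responses v \<Longrightarrow> snd o'' \<le> snd (top_response v)"
    unfolding top_response_def by auto
qed

lemma top_response_in_menu: "top_response v \<in> K"
  and top_response_optimal: "o' \<in> K \<Longrightarrow> utility v o' \<le> utility v (top_response v)"
  using top_response(1)[of v] unfolding best_responses_def by blast+

lemma best_responses_limit:
  assumes "x \<longlonglongrightarrow> v" "r \<longlonglongrightarrow> o'" "\<And>n. r n \<in> best_responses (x n)"
  shows "o' \<in> best_responses v"
  unfolding best_responses_def
proof safe
  show "o' \<in> K"
    using assms closed_menu unfolding best_responses_def closed_sequential_limits by blast
  fix o'' assume "o'' \<in> K"
  then have "utility (x n) o'' \<le> utility (x n) (r n)" for n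
    using assms(3) unfolding best_responses_def by blast
  moreover have "(\<lambda>n. utility (x n) o'') \<longlonglongrightarrow> utility v o''"
    "(\<lambda>n. utility (x n) (r n)) \<longlonglongrightarrow> utility v o'"
    unfolding utility_def by (intro tendsto_intros assms(1,2))+
  ultimately show "utility v o'' \<le> utility v o'" by (meson LIMSEQ_le)
qed

text \<open>Upper semicontinuity: along a convergent sequence of values the top responses stay in a
  compact set, and every limit point of them is a best response at the limit.\<close>
lemma closed_top_price_superlevel: "closed {v. a \<le> snd (top_response v)}"
  unfolding closed_sequential_limits
proof (intro allI impI, elim conjE)
  fix x :: "nat \<Rightarrow> real^'k" and v
  assume above: "\<forall>n. x n \<in> {v. a \<le> snd (top_response v)}" and lim: "x \<longlonglongrightarrow> v"
  obtain B where B: "\<And>n. norm (x n) \<le> B"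
    using lim by (metis Cauchy_Bseq LIMSEQ_imp_Cauchy BseqE less_imp_le)
  have "\<forall>n. top_response (x n) \<in> bounded_part B"
    using best_responses_subset[OF B] top_response(1) by blast
  then obtain o' r where "strict_mono r" and sub: "(\<lambda>n. top_response (x (r n))) \<longlonglongrightarrow> o'"
    using compact_imp_seq_compact[OF compact_bounded_part, of B]
    unfolding seq_compact_def o_def by meson
  have "o' \<in> best_responses v"
    using best_responses_limit[OF LIMSEQ_subseq_LIMSEQ[OF lim \<open>strict_mono r\<close>] sub]
    by (simp add: top_response(1))
  moreover have "a \<le> snd o'"
    using above by (intro LIMSEQ_le_const[OF tendsto_snd[OF sub]]) auto
  ultimately have "a \<le> snd (top_response v)" using top_response(2) order_trans by blast
  then show "v \<in> {v. a \<le> snd (top_response v)}" by simp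
qed

lemma borel_measurable_top_price: "(\<lambda>v. snd (top_response v)) \<in> borel_measurable borel"
  by (rule borel_measurableI_ge) (simp add: borel_closed closed_top_price_superlevel)

end

definition trimmed_menu :: "real set \<Rightarrow> 'k::finite opt set \<Rightarrow> 'k opt set" where
  "trimmed_menu I M = insert (0, 0) (closure {o' \<in> M. snd o' \<in> I})"

lemma trimmed_menu_cases:
  fixes M :: "'k::finite opt set"
  assumes "is_mechanism M" "closed I" "o' \<in> trimmed_menu I M"
  shows "(\<forall>i. 0 \<le> fst o' $ i \<and> fst o' $ i \<le> 1) \<and> (o' = (0, 0) \<or> snd o' \<in> I)"
proof -
  let ?P = "{o'::'k opt. \<forall>i. 0 \<le> fst o' $ i \<and> fst o' $ i \<le> 1} \<inter> snd -` I"
  have "closed ?P"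
    by (intro closed_Int closed_vimage_snd assms(2) closed_Collect_all closed_Collect_conj
        closed_Collect_le continuous_intros)
  moreover have "{o' \<in> M. snd o' \<in> I} \<subseteq> ?P"
    using assms(1) unfolding is_mechanism_def by auto
  ultimately have "closure {o' \<in> M. snd o' \<in> I} \<subseteq> ?P" by (rule closure_minimal[rotated])
  then show ?thesis using assms(3) unfolding trimmed_menu_def by auto
qed

lemma null_in_trimmed_menu: "(0, 0) \<in> trimmed_menu I M"
  by (simp add: trimmed_menu_def)

lemma in_trimmed_menuI: "o' \<in> M \<Longrightarrow> snd o' \<in> I \<Longrightarrow> o' \<in> trimmed_menu I M"
  unfolding trimmed_menu_def by (intro insertI2 closure_subset[THEN subsetD]) simp

lemma closed_menu_trimmed_menu:
  assumes "is_mechanism M" "closed I" "I \<subseteq> {0..}"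
  shows "closed_menu (trimmed_menu I M)"
proof unfold_locales
  show "closed (trimmed_menu I M)" by (simp add: trimmed_menu_def)
  show "(0, 0) \<in> trimmed_menu I M" by (rule null_in_trimmed_menu)
  fix o' i assume "o' \<in> trimmed_menu I M"
  note cases = trimmed_menu_cases[OF assms(1,2) this]
  then show "0 \<le> fst o' $ i \<and> fst o' $ i \<le> 1" by blast
  show "0 \<le> snd o'" using cases assms(3) by auto
qed

lemma is_mechanism_trimmed_menu:
  assumes "is_mechanism M" "closed I"
  shows "is_mechanism (trimmed_menu I M)"
  using null_in_trimmed_menu trimmed_menu_cases[OF assms] unfolding is_mechanism_def by auto

lemma c_expensive_trimmed_menu:
  assumes "is_mechanism M" "closed I" "I \<subseteq> {c..}"
  shows "c_expensive c (trimmed_menu I M)"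
  unfolding c_expensive_def
proof (intro ballI impI)
  fix o' assume "o' \<in> trimmed_menu I M" "o' \<noteq> (0, 0)"
  then have "snd o' \<in> I" using trimmed_menu_cases[OF assms(1,2)] by blast
  then show "c \<le> snd o'" using assms(3) by auto
qed

text \<open>Each option of the trimmed menu is the null option or a limit of options of \<open>M\<close>, and
  utility is continuous in the option.\<close>
lemma utility_trimmed_menu_le:
  assumes "is_mechanism M" "selects M sel" "nonneg_vals v" "o' \<in> trimmed_menu I M"
  shows "utility v o' \<le> utility v (sel v)"
proof -
  have optimal: "utility v o'' \<le> utility v (sel v)" if "o'' \<in> M" for o''
    using assms(2,3) that unfolding selects_def by blast
  have "closure {o' \<in> M. snd o' \<in> I} \<subseteq> {o'. utility v o' \<le> utility v (sel v)}"
  proof (rule closure_minimal)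
    show "{o' \<in> M. snd o' \<in> I} \<subseteq> {o'. utility v o' \<le> utility v (sel v)}"
      using optimal by blast
    show "closed {o'. utility v o' \<le> utility v (sel v)}"
      unfolding utility_def by (intro closed_Collect_le continuous_intros)
  qed
  moreover have "utility v (0, 0) \<le> utility v (sel v)"
    using optimal assms(1) unfolding is_mechanism_def by blast
  ultimately show ?thesis using assms(4) unfolding trimmed_menu_def by blast
qed

locale trimming =
  fixes I :: "real set" and M :: "'k::finite opt set" and sel :: "real^'k \<Rightarrow> 'k opt"
  assumes closed_window: "closed I" and window_nonneg: "I \<subseteq> {0..}"
    and mechanism: "is_mechanism M" and selection: "selects M sel"
begin

sublocale closed_menu "trimmed_menu I M"
  by (rule closed_menu_trimmed_menu[OF mechanism closed_window window_nonneg])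

text \<open>Buyers who may keep their old option do so: a top response could charge them more than
  their old price, and then integrability of the new revenue would be lost.\<close>
definition patched :: "real^'k \<Rightarrow> 'k opt" where
  "patched v = (if nonneg_vals v \<and> snd (sel v) \<in> I then sel v else top_response v)"

lemma selects_patched: "selects (trimmed_menu I M) patched"
  unfolding selects_def
proof (intro allI impI)
  fix v :: "real^'k" assume v: "nonneg_vals v"
  show "patched v \<in> trimmed_menu I M \<and> (\<forall>o' \<in> trimmed_menu I M. utility v o' \<le> utility v (patched v))"
  proof (cases "snd (sel v) \<in> I")
    case True
    have "sel v \<in> M" using selection v unfolding selects_def by blast
    then have "sel v \<in> trimmed_menu I M" using True by (rule in_trimmed_menuI)
    moreover have "patched v = sel v" using True v by (simp add: patched_def)
    ultimately show ?thesis using utility_trimmed_menu_le[OF mechanism selection v] by simp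
  next
    case False
    then have "patched v = top_response v" by (simp add: patched_def)
    then show ?thesis using top_response_in_menu top_response_optimal by simp
  qed
qed

lemma patched_price_cases: "snd (patched v) = 0 \<or> snd (patched v) \<in> I"
proof (cases "nonneg_vals v \<and> snd (sel v) \<in> I")
  case True then show ?thesis unfolding patched_def by simp
next
  case False
  then have "patched v = top_response v" unfolding patched_def by (rule if_not_P)
  then show ?thesis
    using trimmed_menu_cases[OF mechanism closed_window top_response_in_menu[of v]] by auto
qed

lemma patched_price_nonneg: "0 \<le> snd (patched v)"
  using patched_price_cases[of v] window_nonneg by auto

lemma patched_price_ge:
  assumes "nonneg_vals v"
  shows "(if snd (sel v) \<in> I then snd (sel v) else 0) \<le> snd (patched v)"
proof (cases "snd (sel v) \<in> I")
  case True
  with assms have "patched v = sel v" unfolding patched_def by (intro if_P conjI)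
  with True show ?thesis by (simp only: if_P order_refl)
next
  case False then show ?thesis using patched_price_nonneg by simp
qed

lemma patched_price_le:
  assumes "I \<subseteq> {..T}"
  shows "snd (patched v) \<le> max T 0"
proof -
  have "snd (patched v) \<le> T" if "snd (patched v) \<in> I" using that assms by auto
  then show ?thesis using patched_price_cases[of v] by linarith
qed

lemma borel_measurable_patched_price:
  assumes "sets D = sets borel" "(\<lambda>v. snd (sel v)) \<in> borel_measurable D"
  shows "(\<lambda>v. snd (patched v)) \<in> borel_measurable D"
proof -
  have borel_eq: "borel_measurable D = borel_measurable (borel :: (real^'k) measure)"
    by (rule measurable_cong_sets) (use assms in auto)
  have price: "(\<lambda>v. snd (sel v)) \<in> borel_measurable borel" using assms(2) unfolding borel_eq .
  have "closed {v::real^'k. nonneg_vals v}"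
    unfolding nonneg_vals_def by (intro closed_Collect_all closed_Collect_le continuous_intros)
  then have "{v. nonneg_vals v \<and> snd (sel v) \<in> I} \<inter> space borel \<in> sets borel"
    using measurable_sets[OF price borel_closed[OF closed_window]] borel_closed
    by (auto simp: Collect_conj_eq vimage_def)
  from measurable_If_set[OF price borel_measurable_top_price this]
  show ?thesis unfolding borel_eq patched_def by (simp add: if_distrib)
qed

lemma trimmed_revenue:
  fixes D :: "(real^'k) measure"
  assumes "prob_space D" "sets D = sets borel" "AE v in D. nonneg_vals v"
    and integrable_price: "integrable D (\<lambda>v. snd (sel v))"
    and "(\<exists>T. I \<subseteq> {..T}) \<or> (AE v in D. snd (sel v) \<in> I)"
  shows "integrable D (\<lambda>v. snd (patched v))"
    and "(\<integral>v. (if snd (sel v) \<in> I then snd (sel v) else 0) \<partial>D) \<le> Rev D patched"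
proof -
  interpret prob_space D by fact
  have measurable: "(\<lambda>v. snd (patched v)) \<in> borel_measurable D"
    using borel_measurable_patched_price assms(2) integrable_price by blast
  show integrable: "integrable D (\<lambda>v. snd (patched v))"
    using assms(5)
  proof
    assume "\<exists>T. I \<subseteq> {..T}"
    then obtain T where "I \<subseteq> {..T}" by blast
    then show ?thesis
      using patched_price_le patched_price_nonneg
      by (intro Bochner_Integration.integrable_bound[OF integrable_const[of "max T 0"] measurable]) auto
  next
    assume "AE v in D. snd (sel v) \<in> I"
    with assms(3) have "AE v in D. snd (sel v) = snd (patched v)"
      by eventually_elim (simp add: patched_def)
    then show ?thesis by (rule integrable_cong_AE_imp[OF integrable_price measurable])
  qed
  have price_measurable: "(\<lambda>v. snd (sel v)) \<in> borel_measurable D" using integrable_price by blast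
  have "(\<lambda>v. snd (sel v)) -` I \<inter> space D \<in> sets D"
    using measurable_sets[OF price_measurable borel_closed[OF closed_window]] .
  from measurable_If_set[OF price_measurable borel_measurable_const this]
  have "(\<lambda>v. if snd (sel v) \<in> I then snd (sel v) else 0) \<in> borel_measurable D"
    by (simp add: vimage_def)
  then have "integrable D (\<lambda>v. if snd (sel v) \<in> I then snd (sel v) else 0)"
    by (rule Bochner_Integration.integrable_bound[OF integrable_price]) auto
  moreover have "AE v in D. (if snd (sel v) \<in> I then snd (sel v) else 0) \<le> snd (patched v)"
    using assms(3) by eventually_elim (rule patched_price_ge)
  ultimately show "(\<integral>v. (if snd (sel v) \<in> I then snd (sel v) else 0) \<partial>D) \<le> Rev D patched"
    unfolding Rev_def using integrable integral_mono_AE by blast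
qed

end

lemma integral_truncation_tendsto:
  fixes X :: "'a \<Rightarrow> real"
  assumes "integrable D X"
  shows "(\<lambda>N. \<integral>v. (if X v \<in> {c..real N} then X v else 0) \<partial>D)
           \<longlonglongrightarrow> (\<integral>v. (if X v \<in> {c..} then X v else 0) \<partial>D)"
proof (rule integral_dominated_convergence[where w = "\<lambda>v. norm (X v)"])
  have [measurable]: "X \<in> borel_measurable D" using assms by blast
  show "(\<lambda>v. if X v \<in> {c..} then X v else 0) \<in> borel_measurable D"
    "\<And>N. (\<lambda>v. if X v \<in> {c..real N} then X v else 0) \<in> borel_measurable D"
    by measurable
  show "integrable D (\<lambda>v. norm (X v))" using assms by blast
  show "\<And>N. AE v in D. norm (if X v \<in> {c..real N} then X v else 0) \<le> norm (X v)"
    by auto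
  show "AE v in D. (\<lambda>N. if X v \<in> {c..real N} then X v else 0)
                      \<longlonglongrightarrow> (if X v \<in> {c..} then X v else 0)"
  proof (intro AE_I2 tendsto_eventually eventually_sequentiallyI)
    fix v and N :: nat assume "nat \<lceil>X v\<rceil> \<le> N"
    then have "X v \<le> real N" by (metis of_nat_le_iff real_nat_ceiling_ge order_trans)
    then show "(if X v \<in> {c..real N} then X v else 0) = (if X v \<in> {c..} then X v else 0)"
      by auto
  qed
qed

text \<open>The pointwise loss \<open>X \<cdot> 1[X < c]\<close> is at most \<open>c\<close>; if its mean reaches \<open>c\<close>, the nonnegative
  gap \<open>c - X \<cdot> 1[X < c]\<close> vanishes almost surely, which excludes \<open>X < c\<close>.\<close>
lemma AE_ge_if_truncation_loses:
  fixes X :: "'a \<Rightarrow> real"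
  assumes "prob_space D" "integrable D X" "0 \<le> c"
    and loss: "(\<integral>v. (if X v \<in> {c..} then X v else 0) \<partial>D) \<le> integral\<^sup>L D X - c"
  shows "AE v in D. X v \<in> {c..}"
proof -
  interpret prob_space D by fact
  let ?h = "\<lambda>v. if X v \<in> {c..} then X v else 0"
  let ?gap = "\<lambda>v. c - (X v - ?h v)"
  have [measurable]: "X \<in> borel_measurable D" using assms(2) by blast
  have "integrable D ?h"
    by (rule Bochner_Integration.integrable_bound[OF assms(2)]) auto
  then have gap_integrable: "integrable D ?gap" using assms(2) by auto
  have gap_nonneg: "0 \<le> ?gap v" for v using assms(3) by auto
  have "integral\<^sup>L D ?gap = c - (integral\<^sup>L D X - integral\<^sup>L D ?h)"
    using assms(2) \<open>integrable D ?h\<close> by (simp add: integral_diff prob_space)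
  moreover have "0 \<le> integral\<^sup>L D ?gap" using gap_nonneg by (simp add: integral_nonneg_AE)
  ultimately have "integral\<^sup>L D ?gap = 0" using loss by linarith
  then have "AE v in D. ?gap v = 0"
    using integral_nonneg_eq_0_iff_AE[OF gap_integrable] gap_nonneg by auto
  then show ?thesis
    by eventually_elim (auto split: if_splits)
qed

lemma truncation_window:
  fixes X :: "'a \<Rightarrow> real"
  assumes "prob_space D" "integrable D X" "0 \<le> c"
  shows "(\<exists>N::nat. integral\<^sup>L D X - c \<le> (\<integral>v. (if X v \<in> {c..real N} then X v else 0) \<partial>D))
           \<or> (AE v in D. X v \<in> {c..})"
proof (cases "integral\<^sup>L D X - c < (\<integral>v. (if X v \<in> {c..} then X v else 0) \<partial>D)")
  case True
  from order_tendstoD(1)[OF integral_truncation_tendsto[OF assms(2)] True]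
  obtain N where "\<forall>n \<ge> N. integral\<^sup>L D X - c < (\<integral>v. (if X v \<in> {c..real n} then X v else 0) \<partial>D)"
    unfolding eventually_sequentially by blast
  then show ?thesis using less_imp_le by blast
next
  case False
  then show ?thesis by (intro disjI2 AE_ge_if_truncation_loses[OF assms]) (simp only: not_less)
qed

theorem claim4p2:
  fixes c :: real and D :: "(real ^ 'k) measure"
    and M :: "'k opt set" and sel :: "real ^ 'k \<Rightarrow> 'k opt"
  assumes "0 \<le> c"
    and "prob_space D" and "sets D = sets borel"
    and "AE v in D. nonneg_vals v"
    and "is_mechanism M" and "selects M sel"
    and "integrable D (\<lambda>v. snd (sel v))"
  shows "\<exists>M' sel'. is_mechanism M' \<and> selects M' sel' \<and> c_expensive c M'
           \<and> integrable D (\<lambda>v. snd (sel' v)) \<and> Rev D sel' \<ge> Rev D sel - c"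
proof -
  let ?kept = "\<lambda>I. \<integral>v. (if snd (sel v) \<in> I then snd (sel v) else 0) \<partial>D"
  have trimmed: "?thesis" if "closed I" "I \<subseteq> {c..}" "Rev D sel - c \<le> ?kept I"
    and "(\<exists>T. I \<subseteq> {..T}) \<or> (AE v in D. snd (sel v) \<in> I)" for I
  proof -
    interpret trimming I M sel using that assms by unfold_locales auto
    show ?thesis
      using trimmed_revenue[OF assms(2-4,7) that(4)] that(3) selects_patched
        is_mechanism_trimmed_menu[OF assms(5) that(1)] c_expensive_trimmed_menu[OF assms(5) that(1,2)]
      by (intro exI[of _ "trimmed_menu I M"] exI[of _ patched]) simp
  qed
  from truncation_window[OF assms(2,7,1)] show ?thesis
  proof
    assume "\<exists>N::nat. integral\<^sup>L D (\<lambda>v. snd (sel v)) - c \<le> ?kept {c..real N}"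
    then obtain N :: nat where "Rev D sel - c \<le> ?kept {c..real N}" unfolding Rev_def by blast
    then show ?thesis by (intro trimmed[of "{c..real N}"]) auto
  next
    assume above: "AE v in D. snd (sel v) \<in> {c..}"
    have [measurable]: "(\<lambda>v. snd (sel v)) \<in> borel_measurable D" using assms(7) by blast
    have "?kept {c..} = Rev D sel"
      unfolding Rev_def
    proof (rule integral_cong_AE)
      show "AE v in D. (if snd (sel v) \<in> {c..} then snd (sel v) else 0) = snd (sel v)"
        using above by eventually_elim simp
    qed measurable
    then show ?thesis using trimmed[of "{c..}"] above assms(1) by auto
  qed
qed

end
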